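(* Let $p,s\in\mathbb{N}$. There does not exist a $p$-qubit UPB of size $s$ when $2^p-4<s<2^p$.
   Context: A product state in $(\mathbb{C}^2)^{\otimes p}$ is a vector $|v_1\rangle\otimes\cdots\otimes|v_p\rangle$ with each $|v_j\rangle\in\mathbb{C}^2$. A $p$-qubit unextendible product basis (UPB) is a finite set $\mathcal{S}\subseteq(\mathbb{C}^2)^{\otimes p}$ of unit product vectors that are pairwise orthogonal, such that no nonzero product vector outside $\mathcal{S}$ is orthogonal to every element of $\mathcal{S}$. The size of a UPB is its number of elements. *)

theory Defs
  imports Complex_Main
begin

text \<open>Vectors in (C^2)^{tensor p} are functions on bit strings of length p
 (computational basis), extended by 0 to other lists.\<close>

definition qidx :: "nat \<Rightarrow> bool list set" where
  "qidx p = {xs. length xs = p}"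

definition prod_vec :: "nat \<Rightarrow> (nat \<Rightarrow> bool \<Rightarrow> complex) \<Rightarrow> (bool list \<Rightarrow> complex)" where
  "prod_vec p vs = (\<lambda>xs. if length xs = p then (\<Prod>j<p. vs j (xs ! j)) else 0)"

definition is_product :: "nat \<Rightarrow> (bool list \<Rightarrow> complex) \<Rightarrow> bool" where
  "is_product p v \<longleftrightarrow> (\<exists>vs. v = prod_vec p vs)"

definition qinner :: "nat \<Rightarrow> (bool list \<Rightarrow> complex) \<Rightarrow> (bool list \<Rightarrow> complex) \<Rightarrow> complex" where
  "qinner p u w = (\<Sum>xs\<in>qidx p. cnj (u xs) * w xs)"

definition is_UPB :: "nat \<Rightarrow> (bool list \<Rightarrow> complex) set \<Rightarrow> bool" where
  "is_UPB p S \<longleftrightarrow>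
     finite S \<and>
     (\<forall>v\<in>S. is_product p v \<and> qinner p v v = 1) \<and>
     (\<forall>u\<in>S. \<forall>w\<in>S. u \<noteq> w \<longrightarrow> qinner p u w = 0) \<and>
     (\<forall>v. is_product p v \<and> v \<noteq> (\<lambda>_. 0) \<and> v \<notin> S \<longrightarrow> \<not> (\<forall>u\<in>S. qinner p u v = 0))"

end

theory Submission
  imports Defs "HOL-Library.Function_Algebras"
begin

text \<open>
  We show, by induction on the number \<open>q\<close> of qubits, that a family of pairwise orthogonal
  nonzero product vectors whose size lies between \<open>2^q - 3\<close> and \<open>2^q - 1\<close> always admits a further
  nonzero product vector orthogonal to all of them.

  Write the members of a \<open>(q+1)\<close>-qubit family as \<open>a\<^sub>i \<otimes> \<rho>\<^sub>i\<close> with \<open>a\<^sub>i \<in> \<complex>\<^sup>2\<close>. Being parallel or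
  orthogonal is an equivalence relation on the nonzero vectors of \<open>\<complex>\<^sup>2\<close>, each class consisting
  of two orthogonal lines, and \<open>\<rho>\<^sub>i \<bottom> \<rho>\<^sub>j\<close> unless \<open>a\<^sub>i \<bottom> a\<^sub>j\<close>. Choosing one line in every class
  gives a set \<open>M\<close> of members whose \<open>\<rho>\<close>'s are orthogonal, hence \<open>|M| \<le> 2^q\<close>; taking \<open>M\<close> or its
  complement, \<open>|M|\<close> is \<open>2^q - 1\<close> or \<open>2^q\<close>. In the first case the induction hypothesis yields \<open>y \<bottom> \<rho>\<^sub>M\<close>,
  so \<open>\<rho>\<^sub>M\<close> and \<open>y\<close> form an orthogonal basis, and \<open>a\<^sub>j\<^sup>\<bottom> \<otimes> y\<close> works for a suitable \<open>j\<close>. In the second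
  case \<open>\<rho>\<^sub>M\<close> is a basis; switching to the other line in a class where \<open>M\<close> has more members than
  its complement produces a smaller choice set, the induction hypothesis yields \<open>y\<close> for it, and
  \<open>a\<^sub>i\<^sup>\<bottom> \<otimes> y\<close> works for a member \<open>i\<close> of that class in \<open>M\<close>.
\<close>

section \<open>The inner product on \<open>(\<complex>\<^sup>2)\<^sup>\<otimes>\<^sup>q\<close>\<close>

lemma sum_fun_apply: "(sum F A) x = (\<Sum>a\<in>A. F a x)"
  by (induction A rule: infinite_finite_induct) auto

lemma finite_qidx: "finite (qidx q)"
  using finite_lists_length_eq[of "UNIV :: bool set" q] by (simp add: qidx_def)

lemma card_qidx: "card (qidx q) = 2 ^ q"
  using card_lists_length_eq[of "UNIV :: bool set" q] by (simp add: qidx_def)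

lemma qinner_commute: "qinner q w u = cnj (qinner q u w)"
  unfolding qinner_def by (simp add: mult.commute)

lemma qinner_sum_right:
  "qinner q u (\<lambda>x. \<Sum>k\<in>K. c k * h k x) = (\<Sum>k\<in>K. c k * qinner q u (h k))"
  unfolding qinner_def by (simp add: sum_distrib_left sum.swap[of _ K] mult.left_commute)

lemma qinner_diff_right: "qinner q u (\<lambda>x. v x - w x) = qinner q u v - qinner q u w"
  unfolding qinner_def by (simp add: algebra_simps sum_subtractf)

lemma qinner_scale: "qinner q (\<lambda>x. c * u x) (\<lambda>x. d * w x) = cnj c * d * qinner q u w"
  unfolding qinner_def by (simp add: sum_distrib_left algebra_simps)

lemma qinner_cong:
  assumes "\<And>xs. length xs = q \<Longrightarrow> u xs = u' xs" and "\<And>xs. length xs = q \<Longrightarrow> w xs = w' xs"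
  shows "qinner q u w = qinner q u' w'"
  unfolding qinner_def by (rule sum.cong) (auto simp: qidx_def assms)

lemma qinner_self_eq_0D:
  assumes "qinner q u u = 0" and "length xs = q"
  shows "u xs = 0"
proof -
  have "qinner q u u = of_real (\<Sum>xs\<in>qidx q. (cmod (u xs))\<^sup>2)"
    unfolding qinner_def of_real_sum complex_norm_square by (simp add: mult.commute)
  with assms(1) have "(\<Sum>xs\<in>qidx q. (cmod (u xs))\<^sup>2) = 0"
    by (metis of_real_eq_0_iff)
  then have "\<forall>xs\<in>qidx q. (cmod (u xs))\<^sup>2 = 0"
    by (subst sum_nonneg_eq_0_iff[symmetric]) (auto simp: finite_qidx)
  with assms(2) show ?thesis by (auto simp: qidx_def)
qed

section \<open>Orthogonal families\<close>

lemma orthogonal_family_card_le: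
  fixes g :: "'i \<Rightarrow> bool list \<Rightarrow> complex"
  assumes orth: "\<And>i j. i \<in> J \<Longrightarrow> j \<in> J \<Longrightarrow> i \<noteq> j \<Longrightarrow> qinner q (g i) (g j) = 0"
    and nonzero: "\<And>j. j \<in> J \<Longrightarrow> qinner q (g j) (g j) \<noteq> 0"
  shows "card J \<le> 2 ^ q"
proof -
  interpret fun_vs: vector_space "\<lambda>(c::complex) (f::bool list \<Rightarrow> complex) x. c * f x"
    by unfold_locales (auto simp: fun_eq_iff algebra_simps)
  \<comment> \<open>vectors are unconstrained off length-\<open>q\<close> lists; restricting them puts them into the span
    of the standard basis \<open>T\<close>\<close>
  define restr where "restr v = (\<lambda>xs. if length xs = q then v xs else 0)" for v :: "bool list \<Rightarrow> complex"
  have qinner_restr: "qinner q (restr u) (restr w) = qinner q u w" for u w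
    by (rule qinner_cong) (auto simp: restr_def)
  define S where "S = (\<lambda>j. restr (g j)) ` J"
  define T where "T = (\<lambda>xs ys. if ys = xs then 1 else 0 :: complex) ` qidx q"
  have orth_S: "qinner q u w = 0" if "u \<in> S" "w \<in> S" "u \<noteq> w" for u w
    using that by (auto simp: S_def qinner_restr) (metis orth)
  have nonzero_S: "qinner q u u \<noteq> 0" if "u \<in> S" for u
    using that nonzero by (auto simp: S_def qinner_restr)
  have "inj_on (\<lambda>j. restr (g j)) J"
  proof (rule inj_onI)
    fix i j assume "i \<in> J" "j \<in> J" "restr (g i) = restr (g j)"
    then have "qinner q (g i) (g j) \<noteq> 0" using nonzero qinner_restr by metis
    with \<open>i \<in> J\<close> \<open>j \<in> J\<close> show "i = j" using orth by metis
  qed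
  then have "card S = card J" by (simp add: S_def card_image)
  moreover have "card T \<le> 2 ^ q"
    unfolding T_def using card_image_le[OF finite_qidx] card_qidx by metis
  moreover have "S \<subseteq> fun_vs.span T"
  proof
    fix v assume "v \<in> S"
    then obtain j where v: "v = restr (g j)" by (auto simp: S_def)
    have "v = (\<Sum>xs\<in>qidx q. (\<lambda>ys. g j xs * (if ys = xs then 1 else 0)))"
      using finite_qidx by (auto simp: fun_eq_iff sum_fun_apply v restr_def qidx_def if_distrib cong: if_cong)
    also have "\<dots> \<in> fun_vs.span T"
      by (intro fun_vs.span_sum fun_vs.span_scale[of _ _ "g j _", simplified] fun_vs.span_base)
        (auto simp: T_def)
    finally show "v \<in> fun_vs.span T" .
  qed
  moreover have "fun_vs.independent S"
  proof
    assume "fun_vs.dependent S"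
    then obtain t u v where t: "finite t" "t \<subseteq> S" "(\<Sum>w\<in>t. (\<lambda>x. u w * w x)) = 0"
      and v: "v \<in> t" "u v \<noteq> 0"
      unfolding fun_vs.dependent_explicit by blast
    have "0 = qinner q v (\<lambda>x. \<Sum>w\<in>t. u w * w x)"
      using t(3) by (simp add: qinner_def fun_eq_iff sum_fun_apply)
    also have "\<dots> = (\<Sum>w\<in>t. u w * qinner q v w)" by (rule qinner_sum_right)
    also have "\<dots> = u v * qinner q v v + (\<Sum>w\<in>t - {v}. u w * qinner q v w)"
      by (rule sum.remove[OF t(1) v(1)])
    also have "(\<Sum>w\<in>t - {v}. u w * qinner q v w) = 0"
    proof (intro sum.neutral ballI)
      fix w assume "w \<in> t - {v}"
      with t(2) v(1) have "qinner q v w = 0" by (intro orth_S) auto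
      then show "u w * qinner q v w = 0" by simp
    qed
    finally show False using v t(2) nonzero_S by auto
  qed
  ultimately show ?thesis
    using fun_vs.independent_span_bound[of T S] by (simp add: T_def finite_qidx)
qed

lemma orthogonal_family_complete:
  fixes g :: "'i \<Rightarrow> bool list \<Rightarrow> complex"
  assumes "finite J" and "card J = 2 ^ q"
    and orth: "\<And>i j. i \<in> J \<Longrightarrow> j \<in> J \<Longrightarrow> i \<noteq> j \<Longrightarrow> qinner q (g i) (g j) = 0"
    and nonzero: "\<And>j. j \<in> J \<Longrightarrow> qinner q (g j) (g j) \<noteq> 0"
    and w_orth: "\<And>j. j \<in> J \<Longrightarrow> qinner q (g j) w = 0"
  shows "qinner q w w = 0"
proof (rule ccontr)
  assume w: "qinner q w w \<noteq> 0"
  have w_orth': "qinner q w (g j) = 0" if "j \<in> J" for j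
    using w_orth[OF that] qinner_commute[of q w "g j"] by simp
  have "card (insert None (Some ` J)) \<le> 2 ^ q"
    by (rule orthogonal_family_card_le[of _ q "case_option w g"])
      (auto simp: orth w_orth w_orth' nonzero w split: option.split)
  moreover have "card (insert None (Some ` J)) = card J + 1"
    using \<open>finite J\<close> by (simp add: card_image)
  ultimately show False using \<open>card J = 2 ^ q\<close> by simp
qed

lemma orthogonal_basis_expansion:
  fixes g :: "'i \<Rightarrow> bool list \<Rightarrow> complex"
  assumes fin: "finite J" and card: "card J = 2 ^ q"
    and orth: "\<And>i j. i \<in> J \<Longrightarrow> j \<in> J \<Longrightarrow> i \<noteq> j \<Longrightarrow> qinner q (g i) (g j) = 0"
    and nonzero: "\<And>j. j \<in> J \<Longrightarrow> qinner q (g j) (g j) \<noteq> 0"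
  shows "qinner q u z = (\<Sum>k\<in>J. qinner q (g k) z / qinner q (g k) (g k) * qinner q u (g k))"
proof -
  define c where "c k = qinner q (g k) z / qinner q (g k) (g k)" for k
  define w where "w = (\<lambda>xs. z xs - (\<Sum>k\<in>J. c k * g k xs))"
  have w_orth: "qinner q (g j) w = 0" if j: "j \<in> J" for j
  proof -
    have "(\<Sum>k\<in>J - {j}. c k * qinner q (g j) (g k)) = 0"
      by (rule sum.neutral) (auto simp: orth j)
    then have "(\<Sum>k\<in>J. c k * qinner q (g j) (g k)) = c j * qinner q (g j) (g j)"
      by (simp add: sum.remove[OF fin j])
    also have "\<dots> = qinner q (g j) z"
      using nonzero[OF j] by (simp add: c_def)
    finally show ?thesis
      by (simp add: w_def qinner_diff_right qinner_sum_right)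
  qed
  have "qinner q w w = 0"
    using fin card orth nonzero w_orth by (rule orthogonal_family_complete)
  then have "qinner q u z = qinner q u (\<lambda>xs. \<Sum>k\<in>J. c k * g k xs)"
    by (intro qinner_cong) (auto dest: qinner_self_eq_0D simp: w_def)
  also have "\<dots> = (\<Sum>k\<in>J. c k * qinner q u (g k))" by (rule qinner_sum_right)
  finally show ?thesis by (simp add: c_def)
qed

lemma orthogonal_basis_expansion_insert:
  fixes g :: "'i \<Rightarrow> bool list \<Rightarrow> complex"
  assumes fin: "finite J" and card: "card J + 1 = 2 ^ q"
    and orth: "\<And>i j. i \<in> J \<Longrightarrow> j \<in> J \<Longrightarrow> i \<noteq> j \<Longrightarrow> qinner q (g i) (g j) = 0"
    and nonzero: "\<And>j. j \<in> J \<Longrightarrow> qinner q (g j) (g j) \<noteq> 0"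
    and y: "qinner q y y \<noteq> 0" "\<And>j. j \<in> J \<Longrightarrow> qinner q (g j) y = 0"
  shows "qinner q u z = qinner q y z / qinner q y y * qinner q u y
           + (\<Sum>k\<in>J. qinner q (g k) z / qinner q (g k) (g k) * qinner q u (g k))"
proof -
  have y': "qinner q y (g j) = 0" if "j \<in> J" for j
    using y(2)[OF that] qinner_commute[of q y "g j"] by simp
  have "qinner q u z = (\<Sum>k\<in>insert None (Some ` J).
          qinner q (case_option y g k) z / qinner q (case_option y g k) (case_option y g k)
          * qinner q u (case_option y g k))"
    by (rule orthogonal_basis_expansion)
      (use fin card in \<open>auto simp: card_image orth nonzero y y' split: option.split\<close>)
  with fin show ?thesis by (simp add: sum.reindex)
qed

section \<open>Vectors of \<open>\<complex>\<^sup>2\<close> and splitting off the first qubit\<close>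

definition inner2 :: "(bool \<Rightarrow> complex) \<Rightarrow> (bool \<Rightarrow> complex) \<Rightarrow> complex" where
  "inner2 a b = cnj (a False) * b False + cnj (a True) * b True"

definition det2 :: "(bool \<Rightarrow> complex) \<Rightarrow> (bool \<Rightarrow> complex) \<Rightarrow> complex" where
  "det2 a b = a False * b True - a True * b False"

definition perp2 :: "(bool \<Rightarrow> complex) \<Rightarrow> bool \<Rightarrow> complex" where
  "perp2 b = (\<lambda>x. if x then cnj (b False) else - cnj (b True))"

definition nonzero2 :: "(bool \<Rightarrow> complex) \<Rightarrow> bool" where
  "nonzero2 a \<longleftrightarrow> a False \<noteq> 0 \<or> a True \<noteq> 0"

lemma inner2_commute: "inner2 b a = cnj (inner2 a b)"
  by (simp add: inner2_def mult.commute)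

lemma det2_swap: "det2 b a = - det2 a b"
  by (simp add: det2_def algebra_simps)

lemma det2_self: "det2 a a = 0"
  by (simp add: det2_def mult.commute)

lemma inner2_perp2: "inner2 a (perp2 b) = - cnj (det2 a b)"
  by (simp add: inner2_def perp2_def det2_def algebra_simps)

lemma nonzero2_perp2: "nonzero2 (perp2 b) \<longleftrightarrow> nonzero2 b"
  by (auto simp: nonzero2_def perp2_def)

lemma inner2_self_eq_0_iff: "inner2 a a = 0 \<longleftrightarrow> \<not> nonzero2 a"
proof -
  have "inner2 a a = of_real ((cmod (a False))\<^sup>2 + (cmod (a True))\<^sup>2)"
    unfolding inner2_def of_real_add complex_norm_square by (simp add: mult.commute)
  moreover have "(cmod (a False))\<^sup>2 + (cmod (a True))\<^sup>2 = 0 \<longleftrightarrow> \<not> nonzero2 a"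
    by (auto simp: nonzero2_def add_nonneg_eq_0_iff)
  ultimately show ?thesis by (metis of_real_eq_0_iff)
qed

lemma det2_eq_0_imp_multiple:
  assumes "det2 a b = 0" and "nonzero2 a"
  obtains l where "\<And>x. b x = l * a x"
proof (cases "a False = 0")
  case True
  with assms have "a True \<noteq> 0" "b False = 0" by (auto simp: nonzero2_def det2_def)
  with True show ?thesis by (intro that[of "b True / a True"]) (case_tac x; simp)
next
  case False
  with assms(1) have "b True = b False / a False * a True" by (simp add: det2_def field_simps)
  with False show ?thesis by (intro that[of "b False / a False"]) (case_tac x; simp)
qed

lemma det2_trans:
  assumes "det2 a b = 0" and "det2 b c = 0" and "nonzero2 b"
  shows "det2 a c = 0"
proof -
  have "b False * det2 a c = a False * det2 b c + c False * det2 a b"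
    and "b True * det2 a c = a True * det2 b c + c True * det2 a b"
    by (simp_all add: det2_def algebra_simps)
  with assms show ?thesis by (auto simp: nonzero2_def)
qed

lemma det2_inner2_trans:
  assumes "det2 a b = 0" and "inner2 b c = 0" and "nonzero2 b"
  shows "inner2 a c = 0"
proof -
  obtain l where "\<And>x. a x = l * b x"
    using det2_eq_0_imp_multiple[of b a] assms det2_swap[of a b] by auto
  then have "inner2 a c = cnj l * inner2 b c" by (simp add: inner2_def algebra_simps)
  with assms show ?thesis by simp
qed

lemma inner2_det2_trans:
  assumes "inner2 a b = 0" and "det2 b c = 0" and "nonzero2 b"
  shows "inner2 a c = 0"
proof -
  obtain l where "\<And>x. c x = l * b x" using det2_eq_0_imp_multiple assms by metis
  then have "inner2 a c = l * inner2 a b" by (simp add: inner2_def algebra_simps)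
  with assms show ?thesis by simp
qed

lemma inner2_inner2_trans:
  assumes "inner2 a b = 0" and "inner2 b c = 0" and "nonzero2 b"
  shows "det2 a c = 0"
proof -
  have ba: "inner2 b a = 0" using assms(1) inner2_commute[of a b] by simp
  have "cnj (b False) * det2 a c = c True * inner2 b a - a True * inner2 b c"
    and "cnj (b True) * det2 a c = a False * inner2 b c - c False * inner2 b a"
    by (simp_all add: det2_def inner2_def algebra_simps)
  with assms ba show ?thesis by (auto simp: nonzero2_def)
qed

lemma det2_inner2_not_both_0:
  assumes "det2 a b = 0" and "inner2 a b = 0" and "nonzero2 a" and "nonzero2 b"
  shows False
proof -
  obtain l where l: "\<And>x. b x = l * a x" using det2_eq_0_imp_multiple assms by metis
  then have "inner2 a b = l * inner2 a a" by (simp add: inner2_def algebra_simps)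
  with assms(2,3) have "l = 0" by (simp add: inner2_self_eq_0_iff)
  with l assms(4) show False by (simp add: nonzero2_def)
qed

lemma qinner_Suc:
  "qinner (Suc q) u w = qinner q (\<lambda>xs. u (False # xs)) (\<lambda>xs. w (False # xs))
                      + qinner q (\<lambda>xs. u (True # xs)) (\<lambda>xs. w (True # xs))"
proof -
  have qidx_Suc: "qidx (Suc q) = (\<lambda>(b, xs). b # xs) ` (UNIV \<times> qidx q)"
    by (auto simp: qidx_def image_iff length_Suc_conv)
  have "inj_on (\<lambda>(b, xs). b # xs) (UNIV \<times> qidx q)" by (auto simp: inj_on_def)
  then have "qinner (Suc q) u w = (\<Sum>(b, xs)\<in>UNIV \<times> qidx q. cnj (u (b # xs)) * w (b # xs))"
    unfolding qinner_def qidx_Suc by (subst sum.reindex) (simp_all add: case_prod_unfold)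
  also have "\<dots> = (\<Sum>b\<in>UNIV. \<Sum>xs\<in>qidx q. cnj (u (b # xs)) * w (b # xs))"
    by (simp add: sum.cartesian_product)
  finally show ?thesis by (simp add: UNIV_bool qinner_def)
qed

lemma qinner_Suc_tensor:
  assumes "\<And>b xs. length xs = q \<Longrightarrow> u (b # xs) = a b * U xs"
    and "\<And>b xs. length xs = q \<Longrightarrow> w (b # xs) = c b * W xs"
  shows "qinner (Suc q) u w = inner2 a c * qinner q U W"
proof -
  have "qinner q (\<lambda>xs. u (b # xs)) (\<lambda>xs. w (b # xs)) = qinner q (\<lambda>xs. a b * U xs) (\<lambda>xs. c b * W xs)" for b
    by (rule qinner_cong) (simp_all add: assms)
  then show ?thesis
    by (simp only: qinner_Suc qinner_scale) (simp add: inner2_def algebra_simps)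
qed

lemma prod_vec_Suc:
  "length xs = q \<Longrightarrow> prod_vec (Suc q) vs (b # xs) = vs 0 b * prod_vec q (\<lambda>j. vs (Suc j)) xs"
  unfolding prod_vec_def by (simp add: prod.lessThan_Suc_shift del: prod.lessThan_Suc)

lemma is_product_SucE:
  assumes "is_product (Suc q) g"
  obtains a \<rho> where "is_product q \<rho>" and "\<And>b xs. length xs = q \<Longrightarrow> g (b # xs) = a b * \<rho> xs"
proof -
  obtain vs where "g = prod_vec (Suc q) vs" using assms by (auto simp: is_product_def)
  then show ?thesis
    by (intro that[of "prod_vec q (\<lambda>j. vs (Suc j))" "vs 0"]) (auto simp: is_product_def prod_vec_Suc)
qed

lemma is_product_Suc_tensor:
  assumes "is_product q y"
  obtains Y where "is_product (Suc q) Y" and "\<And>b xs. length xs = q \<Longrightarrow> Y (b # xs) = x b * y xs"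
proof -
  obtain ys where "y = prod_vec q ys" using assms by (auto simp: is_product_def)
  then show ?thesis
    by (intro that[of "prod_vec (Suc q) (case_nat x ys)"]) (auto simp: is_product_def prod_vec_Suc)
qed

section \<open>The induction step\<close>

lemma card_fibre_majority:
  assumes "finite A" and "finite B" and "card B < card A"
  obtains a where "a \<in> A" and "card {x \<in> B. f x = f a} < card {x \<in> A. f x = f a}"
proof -
  have "(\<Sum>r\<in>f ` A. card {x \<in> A. f x = r}) = card A"
    using sum.group[of A "f ` A" f "\<lambda>_. 1 :: nat"] assms(1) by simp
  moreover have "(\<Sum>r\<in>f ` A. card {x \<in> B. f x = r}) = card (\<Union>r\<in>f ` A. {x \<in> B. f x = r})"
    using assms(1,2) by (intro card_UN_disjoint[symmetric]) auto
  moreover have "card (\<Union>r\<in>f ` A. {x \<in> B. f x = r}) \<le> card B"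
    using assms(2) by (intro card_mono) auto
  ultimately have "\<not> (\<Sum>r\<in>f ` A. card {x \<in> A. f x = r}) \<le> (\<Sum>r\<in>f ` A. card {x \<in> B. f x = r})"
    using assms(3) by linarith
  then have "\<exists>r\<in>f ` A. card {x \<in> B. f x = r} < card {x \<in> A. f x = r}"
    by (meson not_le sum_mono)
  with that show ?thesis by force
qed

definition orthogonal_products :: "nat \<Rightarrow> 'i set \<Rightarrow> ('i \<Rightarrow> bool list \<Rightarrow> complex) \<Rightarrow> bool" where
  "orthogonal_products q I g \<longleftrightarrow> finite I \<and>
     (\<forall>i\<in>I. is_product q (g i) \<and> qinner q (g i) (g i) \<noteq> 0) \<and>
     (\<forall>i\<in>I. \<forall>j\<in>I. i \<noteq> j \<longrightarrow> qinner q (g i) (g j) = 0)"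

definition product_extendible :: "nat \<Rightarrow> 'i set \<Rightarrow> ('i \<Rightarrow> bool list \<Rightarrow> complex) \<Rightarrow> bool" where
  "product_extendible q I g \<longleftrightarrow>
     (\<exists>y. is_product q y \<and> qinner q y y \<noteq> 0 \<and> (\<forall>i\<in>I. qinner q (g i) y = 0))"

locale qubit_split =
  fixes q :: nat and I :: "'i set"
    and a :: "'i \<Rightarrow> bool \<Rightarrow> complex" and \<rho> :: "'i \<Rightarrow> bool list \<Rightarrow> complex"
  assumes finite_I: "finite I"
    and nonzero_a: "i \<in> I \<Longrightarrow> nonzero2 (a i)"
    and product_\<rho>: "i \<in> I \<Longrightarrow> is_product q (\<rho> i)"
    and nonzero_\<rho>: "i \<in> I \<Longrightarrow> qinner q (\<rho> i) (\<rho> i) \<noteq> 0"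
    and orthogonal: "i \<in> I \<Longrightarrow> j \<in> I \<Longrightarrow> i \<noteq> j \<Longrightarrow>
      inner2 (a i) (a j) = 0 \<or> qinner q (\<rho> i) (\<rho> j) = 0"
begin

definition parallel :: "'i \<Rightarrow> 'i \<Rightarrow> bool" where
  "parallel i j \<longleftrightarrow> det2 (a i) (a j) = 0"

definition orth :: "'i \<Rightarrow> 'i \<Rightarrow> bool" where
  "orth i j \<longleftrightarrow> inner2 (a i) (a j) = 0"

text \<open>
  On nonzero vectors of \<open>\<complex>\<^sup>2\<close>, \<open>related\<close> is an equivalence relation whose classes consist of two
  orthogonal lines; a \<open>coherent\<close> set of members picks one of the two lines in every class.
\<close>

definition related :: "'i \<Rightarrow> 'i \<Rightarrow> bool" where
  "related i j \<longleftrightarrow> parallel i j \<or> orth i j"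

definition related_class :: "'i \<Rightarrow> 'i set" where
  "related_class i = {j \<in> I. related i j}"

definition rep :: "'i \<Rightarrow> 'i" where
  "rep i = (SOME k. k \<in> I \<and> related i k)"

definition coherent :: "'i set \<Rightarrow> bool" where
  "coherent X \<longleftrightarrow> X \<subseteq> I \<and>
     (\<forall>i\<in>I. \<forall>j\<in>I. parallel i j \<longrightarrow> (i \<in> X \<longleftrightarrow> j \<in> X)) \<and>
     (\<forall>i\<in>I. \<forall>j\<in>I. orth i j \<longrightarrow> (i \<in> X \<longleftrightarrow> j \<notin> X))"

definition orthogonal_tensor :: "(bool \<Rightarrow> complex) \<Rightarrow> (bool list \<Rightarrow> complex) \<Rightarrow> bool" where
  "orthogonal_tensor x y \<longleftrightarrow> nonzero2 x \<and> is_product q y \<and> qinner q y y \<noteq> 0 \<and>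
     (\<forall>i\<in>I. inner2 (a i) x = 0 \<or> qinner q (\<rho> i) y = 0)"

lemma parallel_sym: "parallel i j \<Longrightarrow> parallel j i"
  by (simp add: parallel_def det2_swap[of "a i"])

lemma orth_sym: "orth i j \<Longrightarrow> orth j i"
  by (simp add: orth_def inner2_commute[of "a i"])

lemma parallel_trans: "parallel i j \<Longrightarrow> parallel j k \<Longrightarrow> j \<in> I \<Longrightarrow> parallel i k"
  using det2_trans nonzero_a unfolding parallel_def by blast

lemma parallel_orth_trans: "parallel i j \<Longrightarrow> orth j k \<Longrightarrow> j \<in> I \<Longrightarrow> orth i k"
  using det2_inner2_trans nonzero_a unfolding parallel_def orth_def by blast

lemma orth_parallel_trans: "orth i j \<Longrightarrow> parallel j k \<Longrightarrow> j \<in> I \<Longrightarrow> orth i k"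
  using inner2_det2_trans nonzero_a unfolding parallel_def orth_def by blast

lemma orth_orth_trans: "orth i j \<Longrightarrow> orth j k \<Longrightarrow> j \<in> I \<Longrightarrow> parallel i k"
  using inner2_inner2_trans nonzero_a unfolding parallel_def orth_def by blast

lemma not_parallel_and_orth: "i \<in> I \<Longrightarrow> j \<in> I \<Longrightarrow> parallel i j \<Longrightarrow> orth i j \<Longrightarrow> False"
  using det2_inner2_not_both_0 nonzero_a unfolding parallel_def orth_def by blast

lemma related_refl: "related i i"
  by (simp add: related_def parallel_def det2_self)

lemma related_sym: "related i j \<Longrightarrow> related j i"
  using parallel_sym orth_sym by (auto simp: related_def)

lemma related_trans: "related i j \<Longrightarrow> related j k \<Longrightarrow> j \<in> I \<Longrightarrow> related i k"
  using parallel_trans parallel_orth_trans orth_parallel_trans orth_orth_trans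
  unfolding related_def by blast

lemma qinner_\<rho>_eq_0_if_unrelated:
  "i \<in> I \<Longrightarrow> j \<in> I \<Longrightarrow> \<not> related i j \<Longrightarrow> qinner q (\<rho> i) (\<rho> j) = 0"
  using orthogonal related_refl by (metis orth_def related_def)

lemma qinner_\<rho>_eq_0_across_classes:
  assumes "i \<in> I" and "m \<in> I" and "related k m" and "\<not> related k i"
  shows "qinner q (\<rho> i) (\<rho> m) = 0"
proof -
  have "\<not> related i m" using assms(2-4) related_trans[of k m i] related_sym by blast
  then show ?thesis using qinner_\<rho>_eq_0_if_unrelated assms(1,2) by blast
qed

lemma inner2_perp2_if_parallel: "parallel i j \<Longrightarrow> inner2 (a i) (perp2 (a j)) = 0"
  by (simp add: inner2_perp2 parallel_def)

lemma rep_related: "i \<in> I \<Longrightarrow> rep i \<in> I \<and> related i (rep i)"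
  unfolding rep_def by (rule someI[of _ i]) (simp add: related_refl)

lemma rep_eq_iff:
  assumes "i \<in> I" and "j \<in> I"
  shows "rep i = rep j \<longleftrightarrow> related i j"
proof
  assume "rep i = rep j"
  then show "related i j"
    using rep_related[OF assms(1)] rep_related[OF assms(2)] related_sym related_trans by metis
next
  assume ij: "related i j"
  have "k \<in> I \<and> related i k \<longleftrightarrow> k \<in> I \<and> related j k" for k
    using assms related_sym[OF ij] related_trans[OF ij, of k] related_trans[of j i k] by blast
  then show "rep i = rep j" by (simp add: rep_def)
qed

lemma coherent_subset: "coherent X \<Longrightarrow> X \<subseteq> I"
  by (simp add: coherent_def)

lemma coherent_Diff: "coherent X \<Longrightarrow> coherent (I - X)"
  by (auto simp: coherent_def)

lemma coherent_related_parallel: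
  "coherent X \<Longrightarrow> i \<in> X \<Longrightarrow> j \<in> X \<Longrightarrow> related i j \<Longrightarrow> parallel i j"
  unfolding coherent_def related_def by blast

lemma coherent_orthogonal_products:
  assumes X: "coherent X"
  shows "orthogonal_products q X \<rho>"
proof -
  have XI: "X \<subseteq> I" using X by (rule coherent_subset)
  have "qinner q (\<rho> i) (\<rho> j) = 0" if "i \<in> X" "j \<in> X" "i \<noteq> j" for i j
  proof -
    have "\<not> orth i j" using X that(1,2) unfolding coherent_def by blast
    with orthogonal[of i j] that XI show ?thesis by (auto simp: orth_def)
  qed
  moreover have "finite X" using finite_subset[OF XI finite_I] .
  ultimately show ?thesis
    using XI product_\<rho> nonzero_\<rho> by (auto simp: orthogonal_products_def)
qed

lemma coherent_card_le: "coherent X \<Longrightarrow> card X \<le> 2 ^ q"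
  using coherent_orthogonal_products
  by (intro orthogonal_family_card_le[of X q \<rho>]) (auto simp: orthogonal_products_def)

lemma coherent_symdiff_related_class:
  assumes M: "coherent M" and "i \<in> I"
  shows "coherent ((M - related_class i) \<union> (related_class i - M))"
proof -
  have closed: "j \<in> related_class i \<longleftrightarrow> k \<in> related_class i"
    if "j \<in> I" "k \<in> I" "related j k" for j k
    using that related_trans[of i j k] related_trans[of i k j] related_sym[of j k]
    by (auto simp: related_class_def)
  show ?thesis
    unfolding coherent_def
  proof (intro conjI ballI impI)
    show "M - related_class i \<union> (related_class i - M) \<subseteq> I"
      using coherent_subset[OF M] by (auto simp: related_class_def)
  next
    fix j k assume jk: "j \<in> I" "k \<in> I" "parallel j k"
    then have "j \<in> M \<longleftrightarrow> k \<in> M" using M by (simp add: coherent_def)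
    moreover have "j \<in> related_class i \<longleftrightarrow> k \<in> related_class i"
      using jk by (intro closed) (simp_all add: related_def)
    ultimately show "j \<in> M - related_class i \<union> (related_class i - M) \<longleftrightarrow>
        k \<in> M - related_class i \<union> (related_class i - M)" by blast
  next
    fix j k assume jk: "j \<in> I" "k \<in> I" "orth j k"
    then have "j \<in> M \<longleftrightarrow> k \<notin> M" using M by (simp add: coherent_def)
    moreover have "j \<in> related_class i \<longleftrightarrow> k \<in> related_class i"
      using jk by (intro closed) (simp_all add: related_def)
    ultimately show "j \<in> M - related_class i \<union> (related_class i - M) \<longleftrightarrow>
        k \<notin> M - related_class i \<union> (related_class i - M)" by blast
  qed
qed

lemma coherent_exists_half:
  obtains M where "coherent M" and "card I \<le> 2 * card M"
proof -
  define M0 where "M0 = {i \<in> I. parallel i (rep i)}"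
  have "coherent M0"
    unfolding coherent_def
  proof (intro conjI ballI impI)
    show "M0 \<subseteq> I" by (auto simp: M0_def)
  next
    fix i j assume ij: "i \<in> I" "j \<in> I" "parallel i j"
    then have "rep j = rep i" using rep_eq_iff[OF ij(2,1)] parallel_sym by (simp add: related_def)
    moreover have "parallel i (rep i) \<longleftrightarrow> parallel j (rep i)"
      using parallel_trans[OF parallel_sym[OF ij(3)] _ ij(1)] parallel_trans[OF ij(3) _ ij(2)] by blast
    ultimately show "i \<in> M0 \<longleftrightarrow> j \<in> M0" using ij by (simp add: M0_def)
  next
    fix i j assume ij: "i \<in> I" "j \<in> I" "orth i j"
    then have "rep j = rep i" using rep_eq_iff[OF ij(2,1)] orth_sym by (simp add: related_def)
    have r: "rep i \<in> I" "related i (rep i)" using rep_related ij(1) by auto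
    have ji: "orth j i" using orth_sym ij(3) .
    have "parallel i (rep i) \<longleftrightarrow> \<not> parallel j (rep i)"
    proof
      assume "parallel i (rep i)"
      then have "orth j (rep i)" using orth_parallel_trans[OF ji _ ij(1)] by blast
      then show "\<not> parallel j (rep i)" using not_parallel_and_orth ij(2) r(1) by blast
    next
      assume "\<not> parallel j (rep i)"
      then show "parallel i (rep i)"
        using r(2) orth_orth_trans[OF ji _ ij(1)] unfolding related_def by blast
    qed
    with \<open>rep j = rep i\<close> show "i \<in> M0 \<longleftrightarrow> j \<notin> M0" using ij by (simp add: M0_def)
  qed
  moreover have "card I = card M0 + card (I - M0)"
    using finite_I by (simp add: card_Diff_subset card_mono M0_def)
  ultimately show ?thesis
    using that[of M0] that[of "I - M0"] coherent_Diff[of M0] by linarith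
qed

lemma related_class_majority:
  assumes "M \<subseteq> I" and "card (I - M) < card M"
  obtains i0 where "i0 \<in> M" and "card (related_class i0 - M) < card (M \<inter> related_class i0)"
proof -
  have finite_M: "finite M" using finite_subset[OF assms(1) finite_I] .
  obtain i0 where i0: "i0 \<in> M"
    and majority: "card {j \<in> I - M. rep j = rep i0} < card {j \<in> M. rep j = rep i0}"
    using card_fibre_majority[OF finite_M finite_Diff[OF finite_I] assms(2)] by blast
  have "rep j = rep i0 \<longleftrightarrow> j \<in> related_class i0" if "j \<in> I" for j
    using that rep_eq_iff[OF that, of i0] i0 assms(1) related_sym by (auto simp: related_class_def)
  then have "{j \<in> M. rep j = rep i0} = M \<inter> related_class i0"
    and "{j \<in> I - M. rep j = rep i0} = related_class i0 - M"
    using assms(1) by (auto simp: related_class_def)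
  with majority show ?thesis using that i0 by simp
qed

lemma orthogonal_tensor_deficient:
  assumes M: "coherent M" "card M + 1 = 2 ^ q" and "product_extendible q M \<rho>"
  obtains x y where "orthogonal_tensor x y"
proof -
  obtain y where y: "is_product q y" "qinner q y y \<noteq> 0" "\<And>m. m \<in> M \<Longrightarrow> qinner q (\<rho> m) y = 0"
    using assms(3) by (auto simp: product_extendible_def)
  have MI: "M \<subseteq> I" using coherent_subset[OF M(1)] .
  show ?thesis
  proof (cases "\<forall>j\<in>I. qinner q (\<rho> j) y = 0")
    case True
    then have "orthogonal_tensor (\<lambda>_. 1) y" using y by (simp add: orthogonal_tensor_def nonzero2_def)
    then show ?thesis by (rule that)
  next
    case False
    then obtain j0 where j0: "j0 \<in> I" "qinner q (\<rho> j0) y \<noteq> 0" by blast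
    with y(3) have "j0 \<notin> M" by blast
    have expansion: "qinner q (\<rho> i) (\<rho> j0) = qinner q y (\<rho> j0) / qinner q y y * qinner q (\<rho> i) y
        + (\<Sum>m\<in>M. qinner q (\<rho> m) (\<rho> j0) / qinner q (\<rho> m) (\<rho> m) * qinner q (\<rho> i) (\<rho> m))" for i
      using coherent_orthogonal_products[OF M(1)] M(2) y(2,3)
      by (intro orthogonal_basis_expansion_insert) (auto simp: orthogonal_products_def)
    have "inner2 (a i) (perp2 (a j0)) = 0 \<or> qinner q (\<rho> i) y = 0" if i: "i \<in> I" for i
    proof (cases "i \<in> M \<or> related i j0")
      case True
      have "parallel i j0" if "i \<notin> M"
        using coherent_related_parallel[OF coherent_Diff[OF M(1)]] True that i j0(1) \<open>j0 \<notin> M\<close>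
        by blast
      then show ?thesis using y(3) inner2_perp2_if_parallel by blast
    next
      case False
      have "(\<Sum>m\<in>M. qinner q (\<rho> m) (\<rho> j0) / qinner q (\<rho> m) (\<rho> m) * qinner q (\<rho> i) (\<rho> m)) = 0"
      proof (rule sum.neutral, rule ballI)
        fix m assume "m \<in> M"
        then have "qinner q (\<rho> i) (\<rho> m) = 0 \<or> qinner q (\<rho> m) (\<rho> j0) = 0"
          using qinner_\<rho>_eq_0_across_classes[of i m j0] qinner_\<rho>_eq_0_if_unrelated[of m j0]
            related_sym False i j0(1) MI by blast
        then show "qinner q (\<rho> m) (\<rho> j0) / qinner q (\<rho> m) (\<rho> m) * qinner q (\<rho> i) (\<rho> m) = 0"
          by auto
      qed
      moreover have "qinner q (\<rho> i) (\<rho> j0) = 0"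
        using False qinner_\<rho>_eq_0_if_unrelated i j0(1) by blast
      moreover have "qinner q y (\<rho> j0) \<noteq> 0"
        using j0(2) qinner_commute[of q y "\<rho> j0"] by auto
      ultimately show ?thesis using expansion[of i] y(2) by simp
    qed
    then have "orthogonal_tensor (perp2 (a j0)) y"
      using y nonzero_a[OF j0(1)] by (simp add: orthogonal_tensor_def nonzero2_perp2)
    then show ?thesis by (rule that)
  qed
qed

lemma orthogonal_tensor_swap_class:
  assumes M: "coherent M" "card M = 2 ^ q" and i0: "i0 \<in> M"
    and y: "is_product q y" "qinner q y y \<noteq> 0"
      "\<And>j. j \<in> (M - related_class i0) \<union> (related_class i0 - M) \<Longrightarrow> qinner q (\<rho> j) y = 0"
  shows "orthogonal_tensor (perp2 (a i0)) y"
proof -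
  have MI: "M \<subseteq> I" using coherent_subset[OF M(1)] .
  have expansion: "qinner q (\<rho> i) y
      = (\<Sum>m\<in>M. qinner q (\<rho> m) y / qinner q (\<rho> m) (\<rho> m) * qinner q (\<rho> i) (\<rho> m))" for i
    using coherent_orthogonal_products[OF M(1)] M(2)
    by (intro orthogonal_basis_expansion) (auto simp: orthogonal_products_def)
  have "inner2 (a i) (perp2 (a i0)) = 0 \<or> qinner q (\<rho> i) y = 0" if i: "i \<in> I" for i
  proof (cases "i \<in> M \<longleftrightarrow> i \<in> related_class i0")
    case False
    with y(3) show ?thesis by blast
  next
    case True
    consider "i \<in> M" "related i0 i" | "i \<notin> M" "\<not> related i0 i"
      using True i by (auto simp: related_class_def)
    then show ?thesis
    proof cases
      case 1
      then have "parallel i i0"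
        using coherent_related_parallel[OF M(1)] i0 related_sym by blast
      then show ?thesis by (simp add: inner2_perp2_if_parallel)
    next
      case 2
      have "(\<Sum>m\<in>M. qinner q (\<rho> m) y / qinner q (\<rho> m) (\<rho> m) * qinner q (\<rho> i) (\<rho> m)) = 0"
      proof (rule sum.neutral, rule ballI)
        fix m assume "m \<in> M"
        then have "qinner q (\<rho> i) (\<rho> m) = 0 \<or> qinner q (\<rho> m) y = 0"
          using qinner_\<rho>_eq_0_across_classes[of i m i0] y(3)[of m] 2 i MI
          by (auto simp: related_class_def)
        then show "qinner q (\<rho> m) y / qinner q (\<rho> m) (\<rho> m) * qinner q (\<rho> i) (\<rho> m) = 0"
          by auto
      qed
      then show ?thesis using expansion[of i] by simp
    qed
  qed
  moreover have "nonzero2 (perp2 (a i0))"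
    using nonzero_a i0 MI by (auto simp: nonzero2_perp2)
  ultimately show ?thesis
    using y(1,2) by (simp add: orthogonal_tensor_def)
qed

lemma orthogonal_tensor_full:
  assumes M: "coherent M" "card M = 2 ^ q"
    and card_I: "2 ^ Suc q \<le> card I + 3" "card I < 2 ^ Suc q"
    and IH: "\<And>X. coherent X \<Longrightarrow> 2 ^ q \<le> card X + 3 \<Longrightarrow> card X < 2 ^ q \<Longrightarrow> product_extendible q X \<rho>"
  obtains x y where "orthogonal_tensor x y"
proof -
  have MI: "M \<subseteq> I" using coherent_subset[OF M(1)] .
  have finite_M: "finite M" using finite_subset[OF MI finite_I] .
  have "card I = card M + card (I - M)"
    using finite_I MI by (simp add: card_Diff_subset[OF finite_M] card_mono)
  with M(2) card_I(2) have "card (I - M) < card M" by simp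
  then obtain i0 where i0: "i0 \<in> M"
    and majority: "card (related_class i0 - M) < card (M \<inter> related_class i0)"
    using related_class_majority MI by blast
  define C where "C = related_class i0"
  define M' where "M' = (M - C) \<union> (C - M)"
  have M': "coherent M'"
    using coherent_symdiff_related_class[OF M(1)] i0 MI by (auto simp: M'_def C_def)
  have finite_C: "finite C" using finite_I by (simp add: C_def related_class_def)
  have "card M' = card (M - C) + card (C - M)"
    unfolding M'_def using finite_M finite_C by (intro card_Un_disjoint) auto
  moreover have "card M = card (M - C) + card (M \<inter> C)"
    using card_Int_Diff[OF finite_M, of C] by (simp add: Int_commute add.commute)
  ultimately have "card M' < 2 ^ q" using majority M(2) by (simp add: C_def)
  moreover have "2 ^ q \<le> card M' + 3"
  proof -
    have "card I = card M' + card (I - M')"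
      using finite_I coherent_subset[OF M'] by (simp add: card_Diff_subset card_mono finite_subset)
    moreover have "card (I - M') \<le> 2 ^ q" using coherent_card_le[OF coherent_Diff[OF M']] .
    ultimately show ?thesis using card_I(1) by simp
  qed
  ultimately obtain y where "is_product q y" "qinner q y y \<noteq> 0" "\<And>j. j \<in> M' \<Longrightarrow> qinner q (\<rho> j) y = 0"
    using IH[OF M'] by (auto simp: product_extendible_def)
  then have "orthogonal_tensor (perp2 (a i0)) y"
    by (intro orthogonal_tensor_swap_class[OF M i0]) (auto simp: M'_def C_def)
  then show ?thesis by (rule that)
qed

lemma orthogonal_tensor_exists:
  assumes card_I: "2 ^ Suc q \<le> card I + 3" "card I < 2 ^ Suc q"
    and IH: "\<And>X. orthogonal_products q X \<rho> \<Longrightarrow> 2 ^ q \<le> card X + 3 \<Longrightarrow> card X < 2 ^ q \<Longrightarrow>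
      product_extendible q X \<rho>"
  obtains x y where "orthogonal_tensor x y"
proof -
  obtain M where M: "coherent M" "card I \<le> 2 * card M" by (rule coherent_exists_half)
  have "card M \<le> 2 ^ q" using coherent_card_le[OF M(1)] .
  moreover have "\<not> card M + 2 \<le> 2 ^ q" using M(2) card_I(1) by simp
  ultimately have "card M + 1 = 2 ^ q \<or> card M = 2 ^ q" by linarith
  then show ?thesis
  proof
    assume "card M + 1 = 2 ^ q"
    moreover from this have "product_extendible q M \<rho>"
      using IH[OF coherent_orthogonal_products[OF M(1)]] by simp
    ultimately show ?thesis using orthogonal_tensor_deficient[OF M(1)] that by blast
  next
    assume "card M = 2 ^ q"
    then show ?thesis
      using orthogonal_tensor_full[OF M(1) _ card_I] IH coherent_orthogonal_products that by blast
  qed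
qed

end

theorem orthogonal_products_extendible:
  assumes "orthogonal_products q I g" and "2 ^ q \<le> card I + 3" and "card I < 2 ^ q"
  shows "product_extendible q I g"
  using assms
proof (induction q arbitrary: I g)
  case 0
  then have "I = {}" by (simp add: orthogonal_products_def)
  moreover have "qinner 0 (prod_vec 0 (\<lambda>_ _. 1)) (prod_vec 0 (\<lambda>_ _. 1)) = 1"
    by (simp add: qinner_def qidx_def prod_vec_def)
  ultimately show ?case
    unfolding product_extendible_def is_product_def
    by (intro exI[of _ "prod_vec 0 (\<lambda>_ _. 1)"]) auto
next
  case (Suc q)
  have "\<forall>i\<in>I. \<exists>a \<rho>. is_product q \<rho> \<and> (\<forall>b xs. length xs = q \<longrightarrow> g i (b # xs) = a b * \<rho> xs)"
    using Suc.prems(1) is_product_SucE unfolding orthogonal_products_def by metis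
  then obtain a \<rho> where split: "\<And>i. i \<in> I \<Longrightarrow> is_product q (\<rho> i)"
    "\<And>i b xs. i \<in> I \<Longrightarrow> length xs = q \<Longrightarrow> g i (b # xs) = a i b * \<rho> i xs"
    by metis
  have inner: "qinner (Suc q) (g i) (g j) = inner2 (a i) (a j) * qinner q (\<rho> i) (\<rho> j)"
    if "i \<in> I" "j \<in> I" for i j
    by (rule qinner_Suc_tensor) (simp_all add: split that)
  interpret qubit_split q I a \<rho>
    by standard (use Suc.prems(1) inner split(1) in
      \<open>auto simp: orthogonal_products_def inner2_self_eq_0_iff\<close>)
  obtain x y where xy: "orthogonal_tensor x y"
    using orthogonal_tensor_exists Suc.IH Suc.prems(2,3) by blast
  then obtain Y where Y: "is_product (Suc q) Y" "\<And>b xs. length xs = q \<Longrightarrow> Y (b # xs) = x b * y xs"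
    by (auto simp: orthogonal_tensor_def elim: is_product_Suc_tensor)
  have "qinner (Suc q) Y Y = inner2 x x * qinner q y y"
    by (rule qinner_Suc_tensor) (simp_all add: Y)
  moreover have "qinner (Suc q) (g i) Y = inner2 (a i) x * qinner q (\<rho> i) y" if "i \<in> I" for i
    by (rule qinner_Suc_tensor) (simp_all add: Y split that)
  ultimately show ?case
    using xy Y(1) by (auto simp: product_extendible_def orthogonal_tensor_def inner2_self_eq_0_iff)
qed

theorem proposition2:
  fixes p s :: nat
  assumes "(2::int) ^ p - 4 < int s" and "s < 2 ^ p"
  shows "\<not> (\<exists>S. is_UPB p S \<and> card S = s)"
proof
  assume "\<exists>S. is_UPB p S \<and> card S = s"
  then obtain S where S: "is_UPB p S" "card S = s" by blast
  have "orthogonal_products p S (\<lambda>v. v)"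
    using S(1) by (auto simp: is_UPB_def orthogonal_products_def)
  moreover have "2 ^ p \<le> card S + 3"
  proof -
    have "int (2 ^ p) \<le> int (card S + 3)" using assms(1) S(2) by simp
    then show ?thesis by linarith
  qed
  ultimately obtain y where y: "is_product p y" "qinner p y y \<noteq> 0" "\<forall>u\<in>S. qinner p u y = 0"
    using orthogonal_products_extendible[of p S "\<lambda>v. v"] assms(2) S(2)
    by (auto simp: product_extendible_def)
  have "y \<noteq> (\<lambda>_. 0)" using y(2) by (auto simp: qinner_def)
  moreover have "y \<notin> S" using y(2,3) by auto
  ultimately show False using S(1) y(1,3) unfolding is_UPB_def by blast
qed

end
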